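(* Consider the clique inference problem with nonnegative vertex potentials and the Potts clique potential $C(\mathbf{v})=\lambda\sum_{v\in V}n_v(\mathbf{v})^2$ with $\lambda>0$. Let $\hat{\mathbf{v}}$ be the assignment returned by the generalized $\alpha$-pass algorithm with parameter $q=2$, and let $\mathbf{v}^*$ maximize $F$. Then $F(\hat{\mathbf{v}})\ge\frac{8}{9}F(\mathbf{v}^* )$.
   Context: Clique inference problem: there are $n$ vertices $1,\dots,n$, a finite set $V$ of values, real vertex potentials $\psi_{jv}$ ($1\le j\le n$, $v\in V$), and a clique potential $C$ depending only on the counts $n_v(\mathbf{v})=|\{j:v_j=v\}|$; the objective is $F(\mathbf{v})=\sum_j\psi_{jv_j}+C(\mathbf{v})$ over $\mathbf{v}\in V^n$. Generalized $\alpha$-pass with parameter $q$: for each nonempty subset $A\subseteq V$ with $|A|\le q$ and each count $k\in\{1,\dots,n\}$, sort the vertices in decreasing order of $\max_{\alpha\in A}\psi_{i\alpha}-\max_{v\notin A}\psi_{iv}$, assign the top $k$ vertices their best value in $A$ (a value in $A$ maximizing $\psi_{iv}$) and the remaining vertices their best value not in $A$; output the best (largest $F$) of all these assignments over all $A$ and $k$. *)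

theory Defs
  imports Complex_Main
begin

text \<open>Clique inference. Vertices are 1..n, values form a finite set V, an
assignment is a function x :: nat \<Rightarrow> 'a whose values on {1..n} lie in V.\<close>

definition cnt :: "nat \<Rightarrow> (nat \<Rightarrow> 'a) \<Rightarrow> 'a \<Rightarrow> nat" where
  "cnt n x v = card {j \<in> {1..n}. x j = v}"

definition potts_F :: "(nat \<Rightarrow> 'a \<Rightarrow> real) \<Rightarrow> real \<Rightarrow> 'a set \<Rightarrow> nat \<Rightarrow> (nat \<Rightarrow> 'a) \<Rightarrow> real" where
  "potts_F psi lam V n x = (\<Sum>j=1..n. psi j (x j)) + lam * (\<Sum>v\<in>V. (real (cnt n x v))^2)"

definition margin :: "(nat \<Rightarrow> 'a \<Rightarrow> real) \<Rightarrow> 'a set \<Rightarrow> 'a set \<Rightarrow> nat \<Rightarrow> real" where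
  "margin psi V A i = Max (psi i ` A) - Max (psi i ` (V - A))"

text \<open>x is an assignment the generalized alpha-pass may produce for the pair (A,k):
the top k vertices w.r.t. the margin (any tie-breaking) get a best value in A, the
others a best value outside A.  If A = V (no value outside A, margin = +infinity
for every vertex), every vertex gets its best value in A.\<close>
definition alpha_cand ::
  "(nat \<Rightarrow> 'a \<Rightarrow> real) \<Rightarrow> 'a set \<Rightarrow> nat \<Rightarrow> 'a set \<Rightarrow> nat \<Rightarrow> (nat \<Rightarrow> 'a) \<Rightarrow> bool" where
  "alpha_cand psi V n A k x \<longleftrightarrow>
     (if A = V then
        (\<forall>i\<in>{1..n}. x i \<in> A \<and> psi i (x i) = Max (psi i ` A))
      else
        (\<exists>S \<subseteq> {1..n}. card S = k \<and>
           (\<forall>i\<in>S. \<forall>j\<in>{1..n} - S. margin psi V A j \<le> margin psi V A i) \<and>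
           (\<forall>i\<in>S. x i \<in> A \<and> psi i (x i) = Max (psi i ` A)) \<and>
           (\<forall>i\<in>{1..n} - S. x i \<in> V - A \<and> psi i (x i) = Max (psi i ` (V - A)))))"

definition valid_pair :: "nat \<Rightarrow> 'a set \<Rightarrow> nat \<Rightarrow> 'a set \<Rightarrow> nat \<Rightarrow> bool" where
  "valid_pair q V n A k \<longleftrightarrow> A \<subseteq> V \<and> A \<noteq> {} \<and> card A \<le> q \<and> k \<in> {1..n}"

text \<open>vhat is a possible output of the generalized alpha-pass with parameter q:
for some choice (tie-breaking) of one candidate cand A k per valid pair (A,k),
vhat is one of the chosen candidates with the largest objective.\<close>
definition alpha_pass_output ::
  "nat \<Rightarrow> (nat \<Rightarrow> 'a \<Rightarrow> real) \<Rightarrow> real \<Rightarrow> 'a set \<Rightarrow> nat \<Rightarrow> (nat \<Rightarrow> 'a) \<Rightarrow> bool" where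
  "alpha_pass_output q psi lam V n vhat \<longleftrightarrow>
     (\<exists>cand. (\<forall>A k. valid_pair q V n A k \<longrightarrow> alpha_cand psi V n A k (cand A k)) \<and>
        (\<exists>A k. valid_pair q V n A k \<and> vhat = cand A k) \<and>
        (\<forall>A k. valid_pair q V n A k \<longrightarrow> potts_F psi lam V n (cand A k) \<le> potts_F psi lam V n vhat))"

end

theory Submission
  imports Defs "HOL-Analysis.Convex"
begin

(* Let c v be the number of vertices labelled v by the optimum vstar, a the most frequent label,
   b the next one, and P the vertex score of vstar. Among all assignments that put exactly k
   vertices into A, the alpha-pass candidate for (A, k) has the largest vertex score (an exchange
   argument on the margins), and by Cauchy-Schwarz its clique score is at least lam k^2 / |A|.
   The candidates ({a}, c a), ({a, b}, c a + c b) and ({a}, n) therefore give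
     F vhat >= P + lam (c a)^2,   F vhat >= P + lam (c a + c b)^2 / 2,   F vhat >= lam n^2.
   On the other hand sum_v (c v)^2 <= (c a)^2 + (n - c a) m whenever m bounds the other counts.
   With m = c a / 2 if c a >= 2 c b, and m = c b otherwise, completing squares shows that
   8 times the first, resp. second, bound plus the third dominates 8 F vstar. *)

lemma sum_cnt_eq_card:
  assumes "finite A"
  shows "(\<Sum>v\<in>A. cnt n x v) = card {j\<in>{1..n}. x j \<in> A}"
proof -
  have "card {j\<in>{1..n}. x j \<in> A} = card (\<Union>v\<in>A. {j\<in>{1..n}. x j = v})"
    by (rule arg_cong[of _ _ card]) auto
  also have "\<dots> = (\<Sum>v\<in>A. cnt n x v)"
    unfolding cnt_def using assms by (intro card_UN_disjoint) auto
  finally show ?thesis ..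
qed

lemma square_sum_div_card_le_sum_squares:
  fixes f :: "'a \<Rightarrow> real"
  assumes "finite A" "A \<noteq> {}"
  shows "(sum f A)\<^sup>2 / card A \<le> (\<Sum>v\<in>A. (f v)\<^sup>2)"
proof -
  have "(sum f A)\<^sup>2 \<le> (\<Sum>v\<in>A. (f v)\<^sup>2) * card A"
    using Cauchy_Schwarz_ineq_sum[of f "\<lambda>_. 1" A] by simp
  then show ?thesis
    using assms by (simp add: divide_le_eq card_gt_0_iff)
qed

lemma sum_le_sum_if_dominated:
  fixes f :: "'a \<Rightarrow> real"
  assumes "finite X" "finite Y" "card Y = card X" "\<forall>x\<in>X. \<forall>y\<in>Y. f y \<le> f x"
  shows "sum f Y \<le> sum f X"
proof (cases "X = {}")
  case True
  then show ?thesis using assms by simp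
next
  case False
  define m where "m = Min (f ` X)"
  have "\<forall>y\<in>Y. f y \<le> m"
    unfolding m_def using assms False by auto
  then have "sum f Y \<le> card Y * m"
    by (intro sum_bounded_above) auto
  also have "\<dots> \<le> sum f X"
    using assms(1,3) False by (auto simp: m_def intro: sum_bounded_below)
  finally show ?thesis .
qed

lemma sum_le_sum_top:
  fixes f :: "'a \<Rightarrow> real"
  assumes "finite I" "S \<subseteq> I" "S' \<subseteq> I" "card S' = card S"
    and "\<forall>i\<in>S. \<forall>j\<in>I - S. f j \<le> f i"
  shows "sum f S' \<le> sum f S"
proof -
  have fin: "finite S" "finite S'"
    using finite_subset[OF assms(2,1)] finite_subset[OF assms(3,1)] .
  have "card (S' - S) = card (S - S')"
    using assms(4) fin by (metis card_Int_Diff inf_commute add_left_cancel)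
  then have "sum f (S' - S) \<le> sum f (S - S')"
    using assms fin by (intro sum_le_sum_if_dominated) auto
  moreover have "sum f S = sum f (S \<inter> S') + sum f (S - S')"
    "sum f S' = sum f (S \<inter> S') + sum f (S' - S)"
    using fin by (metis sum.Int_Diff, metis sum.Int_Diff inf_commute)
  ultimately show ?thesis by simp
qed

lemma alpha_cand_card_ge:
  assumes "alpha_cand psi V n A k x" "k \<le> n"
  shows "k \<le> card {j\<in>{1..n}. x j \<in> A}"
proof (cases "A = V")
  case True
  then have "{j\<in>{1..n}. x j \<in> A} = {1..n}"
    using assms(1) unfolding alpha_cand_def by auto
  then show ?thesis using assms(2) by simp
next
  case False
  obtain S where S: "S \<subseteq> {1..n}" "card S = k" "\<forall>i\<in>S. x i \<in> A"
    using assms(1) unfolding alpha_cand_def if_not_P[OF False] by blast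
  have "card S \<le> card {j\<in>{1..n}. x j \<in> A}"
    by (rule card_mono) (use S in auto)
  then show ?thesis
    using S(2) by simp
qed

lemma alpha_cand_vertex_sum_ge:
  assumes "finite V" "A \<subseteq> V" "alpha_cand psi V n A k x"
    and "\<forall>j\<in>{1..n}. y j \<in> V"
    and "card {j\<in>{1..n}. y j \<in> A} = k"
  shows "(\<Sum>j=1..n. psi j (y j)) \<le> (\<Sum>j=1..n. psi j (x j))"
proof (cases "A = V")
  case True
  then have "\<forall>j\<in>{1..n}. psi j (x j) = Max (psi j ` V)"
    using assms(3) unfolding alpha_cand_def by auto
  then show ?thesis
    using assms(1,4) by (intro sum_mono) auto
next
  case False
  define I where "I = {1..n::nat}"
  define MA where "MA j = Max (psi j ` A)" for j
  define MN where "MN j = Max (psi j ` (V - A))" for j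
  obtain S where S: "S \<subseteq> I" "card S = k"
    "\<forall>i\<in>S. \<forall>j\<in>I - S. margin psi V A j \<le> margin psi V A i"
    "\<forall>i\<in>S. psi i (x i) = MA i" "\<forall>i\<in>I - S. psi i (x i) = MN i"
    using assms(3) unfolding alpha_cand_def if_not_P[OF False] MA_def MN_def I_def by auto
  define S' where "S' = {j\<in>I. y j \<in> A}"
  have S': "S' \<subseteq> I" "card S' = k"
    using assms(5) unfolding S'_def I_def by auto
  \<comment> \<open>Best vertex score when exactly the vertices of \<open>T\<close> take a value in \<open>A\<close>; among all
      \<open>k\<close>-sets it is maximised by the candidate's top-\<open>k\<close> set \<open>S\<close>.\<close>
  have best_sum: "(\<Sum>j\<in>I. if j \<in> T then MA j else MN j) = sum MN I + sum (margin psi V A) T"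
    if "T \<subseteq> I" for T
  proof -
    have "(\<Sum>j\<in>I. if j \<in> T then MA j else MN j)
        = (\<Sum>j\<in>I. MN j + (if j \<in> T then margin psi V A j else 0))"
      by (rule sum.cong) (auto simp: margin_def MA_def MN_def)
    also have "\<dots> = sum MN I + sum (margin psi V A) T"
      using that by (simp add: sum.distrib sum.inter_restrict[symmetric] I_def Int_absorb1)
    finally show ?thesis .
  qed
  have "(\<Sum>j\<in>I. psi j (y j)) \<le> (\<Sum>j\<in>I. if j \<in> S' then MA j else MN j)"
    using assms(1,2,4) finite_subset[OF assms(2,1)]
    by (intro sum_mono) (auto simp: S'_def MA_def MN_def I_def)
  also have "\<dots> \<le> (\<Sum>j\<in>I. if j \<in> S then MA j else MN j)"
    using S(1,2,3) S' sum_le_sum_top[of I S S' "margin psi V A"]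
    unfolding best_sum[OF S(1)] best_sum[OF S'(1)] by (simp add: I_def)
  also have "\<dots> = (\<Sum>j\<in>I. psi j (x j))"
    using S by (intro sum.cong) auto
  finally show ?thesis unfolding I_def .
qed

lemma alpha_pass_output_ge:
  assumes "finite V" "0 \<le> lam" "alpha_pass_output q psi lam V n vhat"
    and "A \<subseteq> V" "card A \<le> q" "\<forall>j\<in>{1..n}. y j \<in> V" "a \<in> A" "0 < cnt n y a"
  shows "(\<Sum>j=1..n. psi j (y j)) + lam * (\<Sum>v\<in>A. real (cnt n y v))\<^sup>2 / card A
           \<le> potts_F psi lam V n vhat"
proof -
  define k where "k = card {j\<in>{1..n}. y j \<in> A}"
  have A: "finite A" "A \<noteq> {}"
    using assms(1,4,7) finite_subset by auto
  have k_sum: "k = (\<Sum>v\<in>A. cnt n y v)"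
    unfolding k_def by (rule sum_cnt_eq_card[OF A(1), symmetric])
  have "k \<le> card {1..n}"
    unfolding k_def by (intro card_mono) auto
  moreover have "cnt n y a \<le> k"
    unfolding k_sum using A(1) assms(7) by (intro member_le_sum) auto
  ultimately have "valid_pair q V n A k" "k \<le> n"
    using assms(4,5,7,8) unfolding valid_pair_def by auto
  then obtain x where x: "alpha_cand psi V n A k x" "potts_F psi lam V n x \<le> potts_F psi lam V n vhat"
    using assms(3) unfolding alpha_pass_output_def by blast
  have "real k \<le> (\<Sum>v\<in>A. real (cnt n x v))"
    using alpha_cand_card_ge[OF x(1) \<open>k \<le> n\<close>] sum_cnt_eq_card[OF A(1)] by (metis of_nat_mono of_nat_sum)
  then have "(real k)\<^sup>2 / card A \<le> (\<Sum>v\<in>A. real (cnt n x v))\<^sup>2 / card A"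
    by (simp add: divide_right_mono power_mono)
  also have "\<dots> \<le> (\<Sum>v\<in>A. (real (cnt n x v))\<^sup>2)"
    by (rule square_sum_div_card_le_sum_squares[OF A])
  also have "\<dots> \<le> (\<Sum>v\<in>V. (real (cnt n x v))\<^sup>2)"
    using assms(1,4) by (intro sum_mono2) auto
  finally have "lam * (real k)\<^sup>2 / card A \<le> lam * (\<Sum>v\<in>V. (real (cnt n x v))\<^sup>2)"
    using assms(2) by (simp add: mult_left_mono times_divide_eq_right[symmetric] del: times_divide_eq_right)
  moreover have "(\<Sum>j=1..n. psi j (y j)) \<le> (\<Sum>j=1..n. psi j (x j))"
    using alpha_cand_vertex_sum_ge[OF assms(1,4) x(1) assms(6)] k_def by blast
  moreover have k_real: "(\<Sum>v\<in>A. real (cnt n y v)) = real k"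
    by (simp add: k_sum)
  ultimately show ?thesis
    using x(2) unfolding potts_F_def k_real by linarith
qed

lemma alpha_pass_output_ge_uniform:
  assumes "finite V" "0 \<le> lam" "alpha_pass_output q psi lam V n vhat"
    and "1 \<le> q" "1 \<le> n" "a \<in> V" "\<forall>j\<in>{1..n}. 0 \<le> psi j a"
  shows "lam * (real n)\<^sup>2 \<le> potts_F psi lam V n vhat"
proof -
  have "{j\<in>{1..n}. a = a} = {1..n}"
    by blast
  then have "cnt n (\<lambda>_. a) a = n"
    unfolding cnt_def by simp
  then have "(\<Sum>j=1..n. psi j a) + lam * (real n)\<^sup>2 \<le> potts_F psi lam V n vhat"
    using alpha_pass_output_ge[OF assms(1-3), of "{a}" "\<lambda>_. a" a] assms(4-6) by simp
  moreover have "0 \<le> (\<Sum>j=1..n. psi j a)"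
    using assms(7) by (intro sum_nonneg) auto
  ultimately show ?thesis
    by linarith
qed

lemma sum_cnt_eq_n:
  assumes "finite V" "\<forall>j\<in>{1..n}. x j \<in> V"
  shows "(\<Sum>v\<in>V. cnt n x v) = n"
proof -
  have "{j\<in>{1..n}. x j \<in> V} = {1..n}"
    using assms(2) by auto
  then show ?thesis
    using sum_cnt_eq_card[OF assms(1)] by simp
qed

lemma obtains_most_frequent:
  assumes "finite V" "1 \<le> n" "\<forall>j\<in>{1..n}. x j \<in> V"
  obtains a where "a \<in> V" "0 < cnt n x a" "\<forall>v\<in>V. cnt n x v \<le> cnt n x a"
proof -
  have "V \<noteq> {}"
    using assms(2,3) by auto
  then obtain a where a: "a \<in> V" "Max (cnt n x ` V) = cnt n x a"
    using obtains_MAX[OF assms(1)] by metis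
  then have le: "\<forall>v\<in>V. cnt n x v \<le> cnt n x a"
    using assms(1) by (metis Max_ge finite_imageI imageI)
  have "0 < cnt n x a"
  proof (rule ccontr)
    assume "\<not> 0 < cnt n x a"
    then have "(\<Sum>v\<in>V. cnt n x v) = 0"
      using le by simp
    then show False
      using sum_cnt_eq_n[OF assms(1,3)] assms(2) by simp
  qed
  then show ?thesis
    using that a(1) le by blast
qed

lemma sum_squares_le_max_rest:
  fixes f :: "'a \<Rightarrow> real"
  assumes "finite V" "a \<in> V" "\<forall>v\<in>V - {a}. 0 \<le> f v \<and> f v \<le> m"
  shows "(\<Sum>v\<in>V. (f v)\<^sup>2) \<le> (f a)\<^sup>2 + (sum f V - f a) * m"
proof -
  have "(\<Sum>v\<in>V - {a}. (f v)\<^sup>2) \<le> (\<Sum>v\<in>V - {a}. f v * m)"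
    using assms(3) by (intro sum_mono) (simp add: power2_eq_square mult_left_mono)
  then show ?thesis
    using assms(1,2) by (simp add: sum.remove sum_distrib_right)
qed

lemma sum_squares_le_two_largest:
  fixes f :: "'a \<Rightarrow> real"
  assumes "finite V" "a \<in> V" "\<forall>v\<in>V. 0 \<le> f v \<and> f v \<le> f a"
  obtains "8 * (\<Sum>v\<in>V. (f v)\<^sup>2) \<le> 8 * (f a)\<^sup>2 + (sum f V)\<^sup>2"
    | b where "b \<in> V - {a}" "8 * (\<Sum>v\<in>V. (f v)\<^sup>2) \<le> 4 * (f a + f b)\<^sup>2 + (sum f V)\<^sup>2"
proof (cases "\<exists>v\<in>V - {a}. f a < 2 * f v")
  case False
  then have "(\<Sum>v\<in>V. (f v)\<^sup>2) \<le> (f a)\<^sup>2 + (sum f V - f a) * (f a / 2)"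
    using assms by (intro sum_squares_le_max_rest) force+
  moreover have "8 * (f a)\<^sup>2 + (sum f V)\<^sup>2 - 8 * ((f a)\<^sup>2 + (sum f V - f a) * (f a / 2))
      = (sum f V - 2 * f a)\<^sup>2"
    by (simp add: power2_eq_square field_simps)
  ultimately show ?thesis
    using that(1) by (smt (verit) zero_le_power2)
next
  case True
  then have "V - {a} \<noteq> {}" by blast
  then obtain b where b: "b \<in> V - {a}" "Max (f ` (V - {a})) = f b"
    using assms(1) by (meson finite_Diff obtains_MAX)
  then have b_max: "\<forall>v\<in>V - {a}. f v \<le> f b"
    using assms(1) by (metis Max_ge finite_Diff finite_imageI imageI)
  then have "f a < 2 * f b" "f b \<le> f a"
    using True assms(3) b(1) by force+
  have "(\<Sum>v\<in>V. (f v)\<^sup>2) \<le> (f a)\<^sup>2 + (sum f V - f a) * f b"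
    using assms b_max by (intro sum_squares_le_max_rest) auto
  moreover have "0 \<le> (f a - f b) * (3 * f b - f a)"
    using \<open>f a < 2 * f b\<close> \<open>f b \<le> f a\<close> by (intro mult_nonneg_nonneg) auto
  moreover have "4 * (f a + f b)\<^sup>2 + (sum f V)\<^sup>2 - 8 * ((f a)\<^sup>2 + (sum f V - f a) * f b)
      = (sum f V - 4 * f b)\<^sup>2 + 4 * ((f a - f b) * (3 * f b - f a))"
    by (simp add: power2_eq_square algebra_simps)
  ultimately show ?thesis
    using that(2) b(1) by (smt (verit) zero_le_power2)
qed

theorem theorem7:
  fixes psi :: "nat \<Rightarrow> 'a \<Rightarrow> real" and lam :: real and V :: "'a set" and n :: nat
    and vhat vstar :: "nat \<Rightarrow> 'a"
  assumes "finite V" and "V \<noteq> {}" and "lam > 0"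
    and "\<forall>j\<in>{1..n}. \<forall>v\<in>V. psi j v \<ge> 0"
    and "alpha_pass_output 2 psi lam V n vhat"
    and "\<forall>j\<in>{1..n}. vstar j \<in> V"
    and "\<forall>x. (\<forall>j\<in>{1..n}. x j \<in> V) \<longrightarrow> potts_F psi lam V n x \<le> potts_F psi lam V n vstar"
  shows "potts_F psi lam V n vhat \<ge> 8 / 9 * potts_F psi lam V n vstar"
proof -
  let ?F = "potts_F psi lam V n" and ?P = "\<Sum>j=1..n. psi j (vstar j)"
  define c where "c v = real (cnt n vstar v)" for v
  have lam: "0 \<le> lam"
    using assms(3) by simp
  note output_ge = alpha_pass_output_ge[OF assms(1) lam assms(5) _ _ assms(6)]
  have n: "1 \<le> n"
    using assms(5) unfolding alpha_pass_output_def valid_pair_def by auto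
  obtain \<alpha> where \<alpha>: "\<alpha> \<in> V" "0 < cnt n vstar \<alpha>" "\<forall>v\<in>V. c v \<le> c \<alpha>"
    using obtains_most_frequent[OF assms(1) n assms(6)] unfolding c_def by auto
  have B1: "?P + lam * (c \<alpha>)\<^sup>2 \<le> ?F vhat"
    using output_ge[of "{\<alpha>}" \<alpha>] \<alpha> by (simp add: c_def)
  have B2: "lam * (real n)\<^sup>2 \<le> ?F vhat"
    using alpha_pass_output_ge_uniform[OF assms(1) lam assms(5) _ n \<alpha>(1)] assms(4) \<alpha>(1) by simp
  have F_opt: "?F vstar = ?P + lam * (\<Sum>v\<in>V. (c v)\<^sup>2)"
    unfolding potts_F_def c_def ..
  have "sum c V = n"
    using sum_cnt_eq_n[OF assms(1,6)] unfolding c_def by (metis of_nat_sum)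
  moreover have "\<forall>v\<in>V. 0 \<le> c v \<and> c v \<le> c \<alpha>"
    using \<alpha>(3) by (simp add: c_def)
  ultimately consider "8 * (\<Sum>v\<in>V. (c v)\<^sup>2) \<le> 8 * (c \<alpha>)\<^sup>2 + (real n)\<^sup>2"
    | \<beta> where "\<beta> \<in> V" "\<beta> \<noteq> \<alpha>" "8 * (\<Sum>v\<in>V. (c v)\<^sup>2) \<le> 4 * (c \<alpha> + c \<beta>)\<^sup>2 + (real n)\<^sup>2"
    using sum_squares_le_two_largest[OF assms(1) \<alpha>(1)] by (metis Diff_iff singletonI)
  then show ?thesis
  proof cases
    case 1
    then show ?thesis
      using B1 B2 F_opt lam mult_left_mono[OF 1 lam] by (simp add: algebra_simps)
  next
    case (2 \<beta>)
    then have "?P + lam * (c \<alpha> + c \<beta>)\<^sup>2 / 2 \<le> ?F vhat"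
      using output_ge[of "{\<alpha>, \<beta>}" \<alpha>] \<alpha> by (simp add: c_def)
    then show ?thesis
      using B2 F_opt mult_left_mono[OF 2(3) lam] by (simp add: algebra_simps)
  qed
qed

end
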